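(* Consider the hierarchical sampling setup and supersample construction in the context, with loss $\ell$ taking values in $[0,1]$, and assume the algorithm is a single-round hierarchical aggregation: $W_L^{i_{1:L}}:=\mu_L^{i_{1:L}}$; for $l=L,L-1,\dots,1$, each node $i_{1:l-1}$ outputs $W_{l-1}^{i_{1:l-1}}\sim P_{l-1}\big(\cdot\mid (W_l^{i_{1:l-1},j})_{j=1}^{n_l}\big)$ via an aggregation kernel $P_{l-1}$, independently across nodes given the inputs; the final hypothesis is $W=W_0$. Assume each aggregation kernel at depth $l$ is $\epsilon_l$-differentially private: for any two input tuples $w,w'$ differing in a single coordinate and any measurable set $S$, $P_{l-1}(S\mid w)\le e^{\epsilon_l}P_{l-1}(S\mid w')$. Then $$\mathrm{gen}(P_{W\mid\mu})\le 2\sum_{l=1}^{L}\sqrt{\min\big(\epsilon_l,\ \epsilon_l(e^{\epsilon_l}-1)\big)}.$$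
   Context: Hierarchical sampling setup. Fix integers $L\ge 1$ and $n_1,\dots,n_L\ge 1$; $N_l=\prod_{k=1}^l n_k$. Nodes at depth $l$ are indexed by $i_{1:l}$ with $i_k\in\{1,\dots,n_k\}$. $\mathcal P_L=\mathcal Z$ (data space), $\mathcal P_l$ = probability measures on $\mathcal P_{l+1}$ for $l<L$; meta-distribution $D\in\mathcal P_0$. Tree: $\mu_1^{i_1}$ i.i.d. $D$; for $l\ge2$, conditionally independently $\mu_l^{i_{1:l}}\sim\mu_{l-1}^{i_{1:l-1}}$; leaves are data points in $\mathcal Z$. "$Z\sim\nu$" for $\nu\in\mathcal P_l$ means sampling down the chain with fresh randomness to a point of $\mathcal Z$. $\hat L(w,\mu)=\frac1{N_L}\sum_{i_{1:L}}\ell(w,\mu_L^{i_{1:L}})$, $L(w)=\mathbb{E}_{Z\sim D}\ell(w,Z)$, $\mathrm{gen}(P_{W\mid\mu})=\mathbb{E}[L(W)-\hat L(W,\mu)]$. Hypotheses of all layers (and data points) are assumed to live in a common space so that aggregation kernels are well defined. Supersample construction. Independent uniform $U_l^{i_{1:l}}\in\{1,2\}$ for every node. $\tilde\mu_1^{i_1}=(\mu_{1,1}^{i_1},\mu_{1,2}^{i_1})\sim D^{\otimes2}$; for $l\ge2$, $\tilde\mu_l^{i_{1:l}}=(\mu_{l,1}^{i_{1:l}},\mu_{l,2}^{i_{1:l}})$ are two conditionally independent draws from the selected parent $\mu_{l-1,U_{l-1}^{i_{1:l-1}}}^{i_{1:l-1}}$. Selected nodes $\mu_l^{i_{1:l}}:=\mu_{l,U_l^{i_{1:l}}}^{i_{1:l}}$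 form the training tree on which the algorithm runs. *)

theory Defs
  imports "HOL-Probability.Probability"
begin

text \<open>All nodes (distributions of every level), data points and
hypotheses live in one measurable space M.  A node x of the sampling tree is represented
abstractly by a point of M, and its distribution of children is given by a Markov kernel
K x (so K x is "the measure x" viewed as a distribution on the next level).  The
meta-distribution D is the distribution of the depth-1 nodes.  Widths: n l children per
node at depth l-1 (l = 1..L).  Aggregation kernel at a node of depth l (l = 0..L-1) is
P l, taking an (extensional) tuple indexed by {..<n (Suc l)}.\<close>

text \<open>Relative index paths from a node at depth a to its descendants at depth b
(0-based indices; the index at depth k ranges over {..<n k}).\<close>
definition hpaths :: "(nat \<Rightarrow> nat) \<Rightarrow> nat \<Rightarrow> nat \<Rightarrow> nat list set" where
  "hpaths n a b = {xs. length xs = b - a \<and> (\<forall>k<length xs. xs ! k < n (a + 1 + k))}"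

text \<open>Outcome space of the subtree rooted at depth l: (output hypothesis, leaves).\<close>
definition outsp :: "'a measure \<Rightarrow> (nat \<Rightarrow> nat) \<Rightarrow> nat \<Rightarrow> nat \<Rightarrow> ('a \<times> (nat list \<Rightarrow> 'a)) measure" where
  "outsp M n L l = M \<Otimes>\<^sub>M PiM (hpaths n l L) (\<lambda>_. M)"

definition hstep :: "'a measure \<Rightarrow> (nat \<Rightarrow> (nat \<Rightarrow> 'a) \<Rightarrow> 'a measure) \<Rightarrow> (nat \<Rightarrow> nat) \<Rightarrow> nat
    \<Rightarrow> nat \<Rightarrow> 'a measure \<Rightarrow> ('a \<Rightarrow> ('a \<times> (nat list \<Rightarrow> 'a)) measure) \<Rightarrow> ('a \<times> (nat list \<Rightarrow> 'a)) measure" where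
  "hstep M P n L l C S =
     bind (PiM {..<n (Suc l)} (\<lambda>j. bind C S))
       (\<lambda>rs. bind (P l (\<lambda>j\<in>{..<n (Suc l)}. fst (rs j)))
         (\<lambda>w. return (outsp M n L l)
                (w, \<lambda>p\<in>hpaths n l L. snd (rs (hd p)) (tl p))))"

text \<open>Subtree rooted at a node with value x at height h (= depth L - h).
At a leaf (h = 0): W_L = mu_L = x.\<close>
fun hsub :: "'a measure \<Rightarrow> ('a \<Rightarrow> 'a measure) \<Rightarrow> (nat \<Rightarrow> (nat \<Rightarrow> 'a) \<Rightarrow> 'a measure) \<Rightarrow> (nat \<Rightarrow> nat)
    \<Rightarrow> nat \<Rightarrow> nat \<Rightarrow> 'a \<Rightarrow> ('a \<times> (nat list \<Rightarrow> 'a)) measure" where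
  "hsub M K P n L 0 x = return (outsp M n L L) (x, \<lambda>p\<in>hpaths n L L. x)"
| "hsub M K P n L (Suc h) x = hstep M P n L (L - Suc h) (K x) (hsub M K P n L h)"

definition hjoint :: "'a measure \<Rightarrow> 'a measure \<Rightarrow> ('a \<Rightarrow> 'a measure) \<Rightarrow> (nat \<Rightarrow> (nat \<Rightarrow> 'a) \<Rightarrow> 'a measure)
    \<Rightarrow> (nat \<Rightarrow> nat) \<Rightarrow> nat \<Rightarrow> ('a \<times> (nat list \<Rightarrow> 'a)) measure" where
  "hjoint M D K P n L = hstep M P n L 0 D (hsub M K P n L (L - 1))"

text \<open>Distribution of a data point Z ~ D: sample down the chain (L levels).\<close>
fun hchain :: "'a measure \<Rightarrow> ('a \<Rightarrow> 'a measure) \<Rightarrow> nat \<Rightarrow> 'a measure" where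
  "hchain D K 0 = D"
| "hchain D K (Suc k) = bind (hchain D K k) K"

definition pop_loss :: "'a measure \<Rightarrow> ('a \<Rightarrow> 'a measure) \<Rightarrow> nat \<Rightarrow> ('a \<Rightarrow> 'a \<Rightarrow> real) \<Rightarrow> 'a \<Rightarrow> real" where
  "pop_loss D K L loss w = (\<integral>z. loss w z \<partial>hchain D K (L - 1))"

definition emp_loss :: "(nat \<Rightarrow> nat) \<Rightarrow> nat \<Rightarrow> ('a \<Rightarrow> 'a \<Rightarrow> real) \<Rightarrow> 'a \<Rightarrow> (nat list \<Rightarrow> 'a) \<Rightarrow> real" where
  "emp_loss n L loss w mu = (\<Sum>p\<in>hpaths n 0 L. loss w (mu p)) / real (\<Prod>l\<in>{1..L}. n l)"

definition hgen :: "'a measure \<Rightarrow> 'a measure \<Rightarrow> ('a \<Rightarrow> 'a measure) \<Rightarrow> (nat \<Rightarrow> (nat \<Rightarrow> 'a) \<Rightarrow> 'a measure)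
    \<Rightarrow> (nat \<Rightarrow> nat) \<Rightarrow> nat \<Rightarrow> ('a \<Rightarrow> 'a \<Rightarrow> real) \<Rightarrow> real" where
  "hgen M D K P n L loss =
     (\<integral>wm. pop_loss D K L loss (fst wm) - emp_loss n L loss (fst wm) (snd wm) \<partial>hjoint M D K P n L)"

definition dp_kernel :: "'a measure \<Rightarrow> nat \<Rightarrow> ((nat \<Rightarrow> 'a) \<Rightarrow> 'a measure) \<Rightarrow> real \<Rightarrow> bool" where
  "dp_kernel M m Q \<epsilon> \<longleftrightarrow>
     (\<forall>w\<in>space (PiM {..<m} (\<lambda>_. M)). \<forall>w'\<in>space (PiM {..<m} (\<lambda>_. M)).
        (\<exists>j<m. \<forall>i. i \<noteq> j \<longrightarrow> w i = w' i) \<longrightarrow>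
        (\<forall>S\<in>sets M. measure (Q w) S \<le> exp \<epsilon> * measure (Q w') S))"

end

theory Submission
  imports Defs
begin

(* A training leaf p = j # q is
   leaf q of the subtree below root child j.  The population loss of W is the expected loss
   of W against leaf q of an independent copy of that subtree, and feeding the copy's output
   to P 0 instead of child j's changes the law of W by at most a factor exp \<epsilon>\<^sub>1.  Hence
   every training leaf has expected loss at least exp (- \<epsilon>\<^sub>1) E[pop_loss W], so
   gen <= 1 - exp (- \<epsilon>\<^sub>1) <= 2 sqrt (min \<epsilon>\<^sub>1 (\<epsilon>\<^sub>1 (exp \<epsilon>\<^sub>1 - 1))), and the other summands
   are nonnegative. *)

section \<open>Markov kernels\<close>

lemma measurable_PiM_prob_algebra:
  assumes I: "finite I" and N: "N \<in> X \<rightarrow>\<^sub>M prob_algebra Y"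
  shows "(\<lambda>x. PiM I (\<lambda>_. N x)) \<in> X \<rightarrow>\<^sub>M prob_algebra (PiM I (\<lambda>_. Y))"
proof (rule measurable_prob_algebra_generated[OF sets_PiM Int_stable_prod_algebra prod_algebra_sets_into_space])
  fix a assume "a \<in> space X"
  then have "prob_space (N a)" "sets (N a) = sets Y"
    using N by (auto dest: measurable_space simp: space_prob_algebra)
  then show "prob_space (PiM I (\<lambda>_. N a))" "sets (PiM I (\<lambda>_. N a)) = sets (PiM I (\<lambda>_. Y))"
    by (auto intro!: prob_space_PiM sets_PiM_cong)
next
  fix A assume "A \<in> prod_algebra I (\<lambda>_. Y)"
  then obtain E where A: "A = Pi\<^sub>E I E" and E: "E \<in> (\<Pi> j\<in>I. sets Y)"
    unfolding prod_algebra_eq_finite[OF I] by auto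
  have eq: "emeasure (PiM I (\<lambda>_. N a)) A = (\<Prod>i\<in>I. emeasure (N a) (E i))" if "a \<in> space X" for a
  proof -
    have "prob_space (N a)" "sets (N a) = sets Y"
      using N that by (auto dest: measurable_space simp: space_prob_algebra)
    then interpret product_sigma_finite "\<lambda>_. N a"
      by (simp add: product_sigma_finite_def prob_space_imp_sigma_finite)
    show ?thesis unfolding A using E \<open>sets (N a) = sets Y\<close> by (intro emeasure_PiM I) auto
  qed
  have "(\<lambda>a. \<Prod>i\<in>I. emeasure (N a) (E i)) \<in> borel_measurable X"
    using E by (intro borel_measurable_prod_ennreal measurable_emeasure_kernel[OF measurable_prob_algebraD[OF N]]) auto
  then show "(\<lambda>a. emeasure (PiM I (\<lambda>_. N a)) A) \<in> borel_measurable X"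
    using eq by (subst measurable_cong) auto
qed

lemma kernel_on_prob_algebra_point:
  assumes "C \<in> space (prob_algebra M)" "F \<in> M \<rightarrow>\<^sub>M prob_algebra N"
  shows "F \<in> C \<rightarrow>\<^sub>M subprob_algebra N" "space C = space M"
proof -
  have C: "sets C = sets M" using assms(1) by (simp add: space_prob_algebra)
  show "F \<in> C \<rightarrow>\<^sub>M subprob_algebra N"
    unfolding measurable_cong_sets[OF C refl] by (rule measurable_prob_algebraD[OF assms(2)])
  show "space C = space M" by (rule sets_eq_imp_space_eq[OF C])
qed

lemma distr_bind_prob_algebra:
  assumes "C \<in> space (prob_algebra M)" "S \<in> M \<rightarrow>\<^sub>M prob_algebra N" "f \<in> N \<rightarrow>\<^sub>M N'"
  shows "distr (bind C S) N' f = bind C (\<lambda>x. distr (S x) N' f)"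
  using assms kernel_on_prob_algebra_point[OF assms(1,2)]
  by (intro distr_bind) (auto simp: space_prob_algebra dest: prob_space.not_empty)

lemma nn_integral_resample_coordinate_le:
  fixes h :: "'a \<Rightarrow> 'b \<Rightarrow> ennreal" and Q :: "('i \<Rightarrow> 'b) \<Rightarrow> 'a measure"
  assumes R: "prob_space R" and I: "finite I" "j \<in> I"
    and Q: "Q \<in> PiM I (\<lambda>_. R) \<rightarrow>\<^sub>M prob_algebra X"
    and h[measurable]: "(\<lambda>(w, y). h w y) \<in> borel_measurable (X \<Otimes>\<^sub>M R)"
    and stable: "\<And>rs y g. rs \<in> space (PiM I (\<lambda>_. R)) \<Longrightarrow> y \<in> space R \<Longrightarrow> g \<in> borel_measurable X \<Longrightarrow>
      (\<integral>\<^sup>+ w. g w \<partial>Q (rs(j := y))) \<le> ennreal (exp \<epsilon>) * (\<integral>\<^sup>+ w. g w \<partial>Q rs)"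
  shows "ennreal (exp (- \<epsilon>)) * (\<integral>\<^sup>+ rs. \<integral>\<^sup>+ w. \<integral>\<^sup>+ y. h w y \<partial>R \<partial>Q rs \<partial>PiM I (\<lambda>_. R))
      \<le> (\<integral>\<^sup>+ rs. \<integral>\<^sup>+ w. h w (rs j) \<partial>Q rs \<partial>PiM I (\<lambda>_. R))"
proof -
  interpret R: prob_space R by (rule R)
  interpret product_sigma_finite "\<lambda>_. R"
    by (simp add: product_sigma_finite_def R.sigma_finite_measure_axioms)
  define I' where "I' = I - {j}"
  have I': "I = insert j I'" "j \<notin> I'" "finite I'" using I by (auto simp: I'_def)
  define E where "E = (\<lambda>rs. \<integral>\<^sup>+ w. \<integral>\<^sup>+ y. h w y \<partial>R \<partial>Q rs)"
  define F where "F = (\<lambda>rs. \<integral>\<^sup>+ w. h w (rs j) \<partial>Q rs)"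
  note Q' = measurable_prob_algebraD[OF Q]
  have E_meas: "E \<in> borel_measurable (PiM I (\<lambda>_. R))"
    unfolding E_def by (rule nn_integral_measurable_subprob_algebra2[OF _ Q']) measurable
  have F_meas: "F \<in> borel_measurable (PiM I (\<lambda>_. R))"
    unfolding F_def by (rule nn_integral_measurable_subprob_algebra2[OF _ Q']) (use I in measurable)
  have E_le: "E (x(j := y')) \<le> ennreal (exp \<epsilon>) * (\<integral>\<^sup>+ y. F (x(j := y)) \<partial>R)"
    if x: "x \<in> space (PiM I' (\<lambda>_. R))" and y': "y' \<in> space R" for x y'
  proof -
    have upd: "(\<lambda>y. x(j := y)) \<in> R \<rightarrow>\<^sub>M PiM I (\<lambda>_. R)"
      unfolding I'(1) by (rule measurable_component_update[OF x I'(2)])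
    have "Q (x(j := y')) \<in> space (prob_algebra X)"
      using measurable_space[OF Q measurable_space[OF upd y']] .
    then have Qy': "sets (Q (x(j := y'))) = sets X" "prob_space (Q (x(j := y')))"
      by (auto simp: space_prob_algebra)
    interpret Qy': prob_space "Q (x(j := y'))" by (rule Qy'(2))
    interpret pair_sigma_finite "Q (x(j := y'))" R
      by (simp add: pair_sigma_finite_def Qy'.sigma_finite_measure_axioms R.sigma_finite_measure_axioms)
    \<comment> \<open>For each sample y of the loss, stability trades the input y' of Q for y itself.\<close>
    have "E (x(j := y')) = (\<integral>\<^sup>+ y. \<integral>\<^sup>+ w. h w y \<partial>Q (x(j := y')) \<partial>R)"
      unfolding E_def
      by (rule Fubini'[symmetric]) (simp add: measurable_cong_sets[OF sets_pair_measure_cong[OF Qy'(1) refl] refl])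
    also have "\<dots> \<le> (\<integral>\<^sup>+ y. ennreal (exp \<epsilon>) * F (x(j := y)) \<partial>R)"
    proof (rule nn_integral_mono)
      fix y assume y: "y \<in> space R"
      have "(\<integral>\<^sup>+ w. h w y \<partial>Q ((x(j := y))(j := y'))) \<le> ennreal (exp \<epsilon>) * (\<integral>\<^sup>+ w. h w y \<partial>Q (x(j := y)))"
        using y by (intro stable measurable_space[OF upd y] y') measurable
      then show "(\<integral>\<^sup>+ w. h w y \<partial>Q (x(j := y'))) \<le> ennreal (exp \<epsilon>) * F (x(j := y))"
        by (simp add: F_def)
    qed
    also have "\<dots> = ennreal (exp \<epsilon>) * (\<integral>\<^sup>+ y. F (x(j := y)) \<partial>R)"
      by (rule nn_integral_cmult) (rule measurable_compose[OF upd F_meas])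
    finally show ?thesis .
  qed
  have "ennreal (exp (- \<epsilon>)) * (\<integral>\<^sup>+ rs. E rs \<partial>PiM I (\<lambda>_. R))
      = (\<integral>\<^sup>+ x. \<integral>\<^sup>+ y'. ennreal (exp (- \<epsilon>)) * E (x(j := y')) \<partial>R \<partial>PiM I' (\<lambda>_. R))"
    unfolding nn_integral_cmult[OF E_meas, symmetric] using E_meas unfolding I'(1)
    by (intro product_nn_integral_insert[OF I'(3,2)]) measurable
  also have "\<dots> \<le> (\<integral>\<^sup>+ x. \<integral>\<^sup>+ y'. (\<integral>\<^sup>+ y. F (x(j := y)) \<partial>R) \<partial>R \<partial>PiM I' (\<lambda>_. R))"
  proof (intro nn_integral_mono)
    fix x y' assume "x \<in> space (PiM I' (\<lambda>_. R))" "y' \<in> space R"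
    from mult_left_mono[OF E_le[OF this], of "ennreal (exp (- \<epsilon>))"]
    show "ennreal (exp (- \<epsilon>)) * E (x(j := y')) \<le> (\<integral>\<^sup>+ y. F (x(j := y)) \<partial>R)"
      by (simp add: mult.assoc[symmetric] ennreal_mult[symmetric] mult_exp_exp)
  qed
  also have "\<dots> = (\<integral>\<^sup>+ x. \<integral>\<^sup>+ y. F (x(j := y)) \<partial>R \<partial>PiM I' (\<lambda>_. R))"
    by (simp add: R.emeasure_space_1)
  also have "\<dots> = (\<integral>\<^sup>+ rs. F rs \<partial>PiM I (\<lambda>_. R))"
    unfolding I'(1) by (rule product_nn_integral_insert[OF I'(3,2), symmetric]) (use F_meas I'(1) in simp)
  finally show ?thesis by (simp add: E_def F_def)
qed

section \<open>Differential privacy\<close>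

lemma dp_kernelD:
  assumes "dp_kernel M m Q \<epsilon>" "w \<in> space (PiM {..<m} (\<lambda>_. M))" "w' \<in> space (PiM {..<m} (\<lambda>_. M))"
    and "j < m" "\<And>i. i \<noteq> j \<Longrightarrow> w i = w' i" "S \<in> sets M"
  shows "measure (Q w) S \<le> exp \<epsilon> * measure (Q w') S"
  using assms unfolding dp_kernel_def by blast

lemma dp_kernel_nonneg:
  assumes dp: "dp_kernel M m Q \<epsilon>" and Q: "Q \<in> PiM {..<m} (\<lambda>_. M) \<rightarrow>\<^sub>M prob_algebra M"
    and m: "m \<ge> 1" and ne: "space M \<noteq> {}"
  shows "0 \<le> \<epsilon>"
proof -
  obtain a where "a \<in> space M" using ne by auto
  then have w: "(\<lambda>i\<in>{..<m}. a) \<in> space (PiM {..<m} (\<lambda>_. M))" (is "?w \<in> _")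
    by (simp add: space_PiM)
  then interpret prob_space "Q ?w"
    using measurable_space[OF Q] by (simp add: space_prob_algebra)
  have "sets (Q ?w) = sets M"
    using measurable_space[OF Q w] by (simp add: space_prob_algebra)
  then have "measure (Q ?w) (space M) = 1"
    using sets_eq_imp_space_eq prob_space by metis
  moreover have "measure (Q ?w) (space M) \<le> exp \<epsilon> * measure (Q ?w) (space M)"
    using m by (intro dp_kernelD[OF dp w w, of 0]) auto
  ultimately show ?thesis by simp
qed

lemma dp_kernel_nn_integral_le:
  assumes dp: "dp_kernel M m Q \<epsilon>" and Q: "Q \<in> PiM {..<m} (\<lambda>_. M) \<rightarrow>\<^sub>M prob_algebra M"
    and w: "w \<in> space (PiM {..<m} (\<lambda>_. M))" and w': "w' \<in> space (PiM {..<m} (\<lambda>_. M))"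
    and j: "j < m" and eq: "\<And>i. i \<noteq> j \<Longrightarrow> w i = w' i"
    and g: "g \<in> borel_measurable M"
  shows "(\<integral>\<^sup>+ x. g x \<partial>Q w) \<le> ennreal (exp \<epsilon>) * (\<integral>\<^sup>+ x. g x \<partial>Q w')"
proof -
  have Qw: "sets (Q w) = sets M" "prob_space (Q w)"
    and Qw': "sets (Q w') = sets M" "prob_space (Q w')"
    using measurable_space[OF Q w] measurable_space[OF Q w'] by (auto simp: space_prob_algebra)
  interpret Qw: prob_space "Q w" by (rule Qw(2))
  interpret Qw': prob_space "Q w'" by (rule Qw'(2))
  have "emeasure (Q w) S \<le> emeasure (scale_measure (ennreal (exp \<epsilon>)) (Q w')) S" for S
  proof (cases "S \<in> sets M")
    case True
    have "emeasure (Q w) S = ennreal (measure (Q w) S)" by (rule Qw.emeasure_eq_measure)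
    also have "\<dots> \<le> ennreal (exp \<epsilon> * measure (Q w') S)"
      by (rule ennreal_leI) (rule dp_kernelD[OF dp w w' j eq True])
    also have "\<dots> = ennreal (exp \<epsilon>) * emeasure (Q w') S"
      by (simp add: Qw'.emeasure_eq_measure ennreal_mult)
    finally show ?thesis by simp
  qed (simp add: emeasure_notin_sets Qw(1))
  then have "Q w \<le> scale_measure (ennreal (exp \<epsilon>)) (Q w')"
    using Qw Qw' sets_eq_imp_space_eq[of "Q w" "Q w'"]
    by (simp add: le_measure_iff le_fun_def space_scale_measure)
  then have "(\<integral>\<^sup>+ x. g x \<partial>Q w) \<le> (\<integral>\<^sup>+ x. g x \<partial>scale_measure (ennreal (exp \<epsilon>)) (Q w'))"
    by (rule nn_integral_mono_measure[rotated]) (simp add: Qw Qw')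
  also have "\<dots> = ennreal (exp \<epsilon>) * (\<integral>\<^sup>+ x. g x \<partial>Q w')"
    using g by (intro nn_integral_scale_measure) (simp add: measurable_cong_sets[OF Qw'(1) refl])
  finally show ?thesis .
qed

lemma integral_diff_mean_le:
  fixes f :: "'a \<Rightarrow> real" and g :: "'i \<Rightarrow> 'a \<Rightarrow> real"
  assumes J: "prob_space J" and A: "finite A" "A \<noteq> {}" and c: "0 \<le> c" "c \<le> 1"
    and f: "f \<in> borel_measurable J" "\<And>x. x \<in> space J \<Longrightarrow> 0 \<le> f x \<and> f x \<le> 1"
    and g: "\<And>p. p \<in> A \<Longrightarrow> g p \<in> borel_measurable J"
      "\<And>p x. p \<in> A \<Longrightarrow> x \<in> space J \<Longrightarrow> 0 \<le> g p x \<and> g p x \<le> 1"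
    and ge: "\<And>p. p \<in> A \<Longrightarrow> ennreal c * (\<integral>\<^sup>+ x. ennreal (f x) \<partial>J) \<le> (\<integral>\<^sup>+ x. ennreal (g p x) \<partial>J)"
  shows "(\<integral> x. f x - (\<Sum>p\<in>A. g p x) / real (card A) \<partial>J) \<le> 1 - c"
proof -
  interpret prob_space J by (rule J)
  have int_f: "integrable J f"
    using f by (intro integrable_const_bound[where B=1]) auto
  have int_g: "integrable J (g p)" if "p \<in> A" for p
    using g that by (intro integrable_const_bound[where B=1]) auto
  have f01: "0 \<le> (\<integral> x. f x \<partial>J)" "(\<integral> x. f x \<partial>J) \<le> 1"
    using f int_f by (auto intro!: integral_nonneg_AE integral_le_const)
  have "c * (\<integral> x. f x \<partial>J) \<le> (\<integral> x. g p x \<partial>J)" if p: "p \<in> A" for p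
  proof -
    have "ennreal (c * (\<integral> x. f x \<partial>J)) \<le> ennreal (\<integral> x. g p x \<partial>J)"
      using ge[OF p] f g[OF p] int_f int_g[OF p] f01
      by (simp add: ennreal_mult'' nn_integral_eq_integral)
    moreover have "0 \<le> (\<integral> x. g p x \<partial>J)" using g[OF p] by (intro integral_nonneg_AE) auto
    ultimately show ?thesis by simp
  qed
  then have "real (card A) * (c * (\<integral> x. f x \<partial>J)) \<le> (\<Sum>p\<in>A. \<integral> x. g p x \<partial>J)"
    by (rule sum_bounded_below)
  moreover have "0 < real (card A)" using A by (simp add: card_gt_0_iff)
  ultimately have "c * (\<integral> x. f x \<partial>J) \<le> (\<Sum>p\<in>A. \<integral> x. g p x \<partial>J) / real (card A)"
    by (subst pos_le_divide_eq) (simp_all add: ac_simps)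
  moreover have "(\<integral> x. f x - (\<Sum>p\<in>A. g p x) / real (card A) \<partial>J)
      = (\<integral> x. f x \<partial>J) - (\<Sum>p\<in>A. \<integral> x. g p x \<partial>J) / real (card A)"
    using int_f int_g by (simp add: integral_sum)
  moreover have "(1 - c) * (\<integral> x. f x \<partial>J) \<le> 1 - c"
    using c f01 by (simp add: mult_left_le)
  ultimately show ?thesis by (simp add: algebra_simps)
qed

lemma one_minus_exp_neg_le_sqrt_min:
  fixes e :: real assumes e: "0 \<le> e"
  shows "1 - exp (- e) \<le> 2 * sqrt (min e (e * (exp e - 1)))"
proof (cases "e \<le> 1")
  case True
  have "e * e \<le> e * (exp e - 1)"
    using e exp_ge_add_one_self[of e] by (intro mult_left_mono) linarith+
  then have "e * e \<le> min e (e * (exp e - 1))"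
    using True e by (simp add: mult_left_le)
  then have "e \<le> sqrt (min e (e * (exp e - 1)))"
    using e real_sqrt_le_mono[of "e * e"] by simp
  then show ?thesis using exp_ge_add_one_self[of "- e"] e by linarith
next
  case False
  then have "1 * 1 \<le> e * (exp e - 1)"
    using exp_ge_add_one_self[of e] by (intro mult_mono) linarith+
  then have "1 \<le> sqrt (min e (e * (exp e - 1)))" using False by simp
  then show ?thesis using exp_gt_zero[of "- e"] by linarith
qed

section \<open>Index paths\<close>


lemma hpaths_ConsD:
  assumes "p \<in> hpaths n a b" "a < b"
  shows "p = hd p # tl p" "hd p < n (Suc a)" "tl p \<in> hpaths n (Suc a) b"
proof -
  from assms have len: "length p = b - a" and k: "\<And>k. k < length p \<Longrightarrow> p ! k < n (a + 1 + k)"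
    by (auto simp: hpaths_def)
  then have ne: "p \<noteq> []" using assms(2) by auto
  then show "p = hd p # tl p" by simp
  show "hd p < n (Suc a)" using k[of 0] ne by (simp add: hd_conv_nth)
  have "tl p ! k < n (Suc a + 1 + k)" if "k < length (tl p)" for k
    using k[of "Suc k"] ne that by (simp add: nth_tl)
  then show "tl p \<in> hpaths n (Suc a) b" using len ne by (auto simp: hpaths_def)
qed

lemma hpaths_ConsI:
  assumes "j < n (Suc a)" "q \<in> hpaths n (Suc a) b" "a < b"
  shows "j # q \<in> hpaths n a b"
  using assms by (auto simp: hpaths_def nth_Cons split: nat.splits)

lemma hpaths_eq_Cons_image:
  assumes "a < b"
  shows "hpaths n a b = (\<lambda>(j, q). j # q) ` ({..<n (Suc a)} \<times> hpaths n (Suc a) b)"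
proof
  show "hpaths n a b \<subseteq> (\<lambda>(j, q). j # q) ` ({..<n (Suc a)} \<times> hpaths n (Suc a) b)"
  proof
    fix p assume "p \<in> hpaths n a b"
    from hpaths_ConsD[OF this assms] show "p \<in> (\<lambda>(j, q). j # q) ` ({..<n (Suc a)} \<times> hpaths n (Suc a) b)"
      by (intro image_eqI[of _ _ "(hd p, tl p)"]) auto
  qed
qed (use hpaths_ConsI[OF _ _ assms] in auto)

lemma finite_card_hpaths:
  "a \<le> b \<Longrightarrow> finite (hpaths n a b) \<and> card (hpaths n a b) = (\<Prod>k\<in>{Suc a..b}. n k)"
proof (induction "b - a" arbitrary: a)
  case 0
  then have "hpaths n a b = {[]}" by (auto simp: hpaths_def)
  then show ?case using 0 by simp
next
  case (Suc d)
  then have ab: "a < b" by simp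
  have "inj_on (\<lambda>(j, q). j # q) ({..<n (Suc a)} \<times> hpaths n (Suc a) b)"
    by (auto simp: inj_on_def)
  moreover have "{Suc a..b} = insert (Suc a) {Suc (Suc a)..b}" using ab by auto
  ultimately show ?case
    using Suc.hyps(1)[of "Suc a"] Suc.hyps(2) unfolding hpaths_eq_Cons_image[OF ab]
    by (simp add: card_image card_cartesian_product)
qed

section \<open>The sampling tree\<close>

definition child_outputs :: "(nat \<Rightarrow> nat) \<Rightarrow> nat \<Rightarrow> (nat \<Rightarrow> 'a \<times> 'b) \<Rightarrow> nat \<Rightarrow> 'a" where
  "child_outputs n l rs = (\<lambda>j\<in>{..<n (Suc l)}. fst (rs j))"

definition child_leaves :: "(nat \<Rightarrow> nat) \<Rightarrow> nat \<Rightarrow> nat \<Rightarrow> (nat \<Rightarrow> 'a \<times> (nat list \<Rightarrow> 'a)) \<Rightarrow> nat list \<Rightarrow> 'a" where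
  "child_leaves n L l rs = (\<lambda>p\<in>hpaths n l L. snd (rs (hd p)) (tl p))"

definition hagg :: "'a measure \<Rightarrow> (nat \<Rightarrow> (nat \<Rightarrow> 'a) \<Rightarrow> 'a measure) \<Rightarrow> (nat \<Rightarrow> nat) \<Rightarrow> nat \<Rightarrow> nat
    \<Rightarrow> (nat \<Rightarrow> 'a \<times> (nat list \<Rightarrow> 'a)) \<Rightarrow> ('a \<times> (nat list \<Rightarrow> 'a)) measure" where
  "hagg M P n L l rs =
     bind (P l (child_outputs n l rs)) (\<lambda>w. return (outsp M n L l) (w, child_leaves n L l rs))"

lemma hstep_eq_bind_hagg:
  "hstep M P n L l C S = bind (PiM {..<n (Suc l)} (\<lambda>_. bind C S)) (hagg M P n L l)"
  unfolding hstep_def hagg_def child_outputs_def child_leaves_def ..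

lemma measurable_child_outputs:
  assumes "sets R = sets (outsp M n L (Suc l))"
  shows "child_outputs n l \<in> PiM {..<n (Suc l)} (\<lambda>_. R) \<rightarrow>\<^sub>M PiM {..<n (Suc l)} (\<lambda>_. M)"
proof -
  have eq: "sets (PiM {..<n (Suc l)} (\<lambda>_. R)) = sets (PiM {..<n (Suc l)} (\<lambda>_. outsp M n L (Suc l)))"
    using assms by (intro sets_PiM_cong) auto
  show ?thesis
    unfolding measurable_cong_sets[OF eq refl] child_outputs_def outsp_def by measurable
qed

lemma measurable_child_leaves:
  assumes R: "sets R = sets (outsp M n L (Suc l))" and l: "l < L"
  shows "child_leaves n L l \<in> PiM {..<n (Suc l)} (\<lambda>_. R) \<rightarrow>\<^sub>M PiM (hpaths n l L) (\<lambda>_. M)"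
proof -
  have eq: "sets (PiM {..<n (Suc l)} (\<lambda>_. R)) = sets (PiM {..<n (Suc l)} (\<lambda>_. outsp M n L (Suc l)))"
    using R by (intro sets_PiM_cong) auto
  show ?thesis
    unfolding measurable_cong_sets[OF eq refl] child_leaves_def
  proof (rule measurable_restrict)
    fix p assume "p \<in> hpaths n l L"
    with hpaths_ConsD[OF this l] have "hd p \<in> {..<n (Suc l)}" "tl p \<in> hpaths n (Suc l) L" by auto
    then show "(\<lambda>rs. snd (rs (hd p)) (tl p))
        \<in> PiM {..<n (Suc l)} (\<lambda>_. outsp M n L (Suc l)) \<rightarrow>\<^sub>M M"
      unfolding outsp_def by measurable
  qed
qed

fun kiter :: "'a measure \<Rightarrow> ('a \<Rightarrow> 'a measure) \<Rightarrow> nat \<Rightarrow> 'a \<Rightarrow> 'a measure" where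
  "kiter M K 0 x = return M x"
| "kiter M K (Suc h) x = bind (K x) (kiter M K h)"

locale hierarchical_sampling =
  fixes M :: "'a measure" and K :: "'a \<Rightarrow> 'a measure" and P :: "nat \<Rightarrow> (nat \<Rightarrow> 'a) \<Rightarrow> 'a measure"
    and n :: "nat \<Rightarrow> nat" and L :: nat
  assumes K: "K \<in> M \<rightarrow>\<^sub>M prob_algebra M"
    and P: "\<And>l. l < L \<Longrightarrow> P l \<in> PiM {..<n (Suc l)} (\<lambda>_. M) \<rightarrow>\<^sub>M prob_algebra M"
begin

lemma hagg_measurable:
  assumes l: "l < L" and R: "sets R = sets (outsp M n L (Suc l))"
  shows "hagg M P n L l \<in> PiM {..<n (Suc l)} (\<lambda>_. R) \<rightarrow>\<^sub>M prob_algebra (outsp M n L l)"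
proof -
  note [measurable] = measurable_child_outputs[OF R] measurable_child_leaves[OF R l] P[OF l]
  show ?thesis unfolding hagg_def[abs_def] outsp_def by measurable
qed

context
  fixes l R rs
  assumes l: "l < L" and R: "sets R = sets (outsp M n L (Suc l))"
    and rs: "rs \<in> space (PiM {..<n (Suc l)} (\<lambda>_. R))"
begin

lemma aggregate_in_prob_algebra: "P l (child_outputs n l rs) \<in> space (prob_algebra M)"
  by (rule measurable_space[OF P[OF l] measurable_space[OF measurable_child_outputs[OF R] rs]])

lemma child_leaves_in_space: "child_leaves n L l rs \<in> space (PiM (hpaths n l L) (\<lambda>_. M))"
  by (rule measurable_space[OF measurable_child_leaves[OF R l] rs])

lemma measurable_Pair_child_leaves:
  "(\<lambda>w. (w, child_leaves n L l rs)) \<in> P l (child_outputs n l rs) \<rightarrow>\<^sub>M outsp M n L l"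
proof -
  have eq: "sets (P l (child_outputs n l rs)) = sets M"
    using aggregate_in_prob_algebra by (simp add: space_prob_algebra)
  show ?thesis
    unfolding measurable_cong_sets[OF eq refl] outsp_def using child_leaves_in_space by measurable
qed

lemma hagg_eq_distr:
  "hagg M P n L l rs = distr (P l (child_outputs n l rs)) (outsp M n L l) (\<lambda>w. (w, child_leaves n L l rs))"
  using aggregate_in_prob_algebra unfolding hagg_def
  by (intro bind_return_distr' measurable_Pair_child_leaves prob_space.not_empty) (simp add: space_prob_algebra)

lemma distr_hagg_leaf:
  assumes p: "p \<in> hpaths n l L"
  shows "distr (hagg M P n L l rs) M (\<lambda>r. snd r p) = return M (child_leaves n L l rs p)"
proof -
  have leaf: "(\<lambda>r. snd r p) \<in> outsp M n L l \<rightarrow>\<^sub>M M" unfolding outsp_def using p by measurable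
  have "distr (hagg M P n L l rs) M (\<lambda>r. snd r p) = distr (P l (child_outputs n l rs)) M (\<lambda>_. child_leaves n L l rs p)"
    unfolding hagg_eq_distr distr_distr[OF leaf measurable_Pair_child_leaves] by (simp add: comp_def)
  also have "\<dots> = return M (child_leaves n L l rs p)"
    using aggregate_in_prob_algebra child_leaves_in_space p
    by (intro prob_space.distr_const) (auto simp: space_prob_algebra space_PiM)
  finally show ?thesis .
qed

end

lemma kiter_measurable: "kiter M K h \<in> M \<rightarrow>\<^sub>M prob_algebra M"
proof (induction h)
  case 0
  show ?case using measurable_return_prob_space[of M] by (simp add: fun_eq_iff[symmetric])
next
  case (Suc h)
  show ?case using measurable_bind_prob_space[OF K Suc] by simp
qed

lemma bind_kiter_Suc: "x \<in> space M \<Longrightarrow> bind (kiter M K h x) K = kiter M K (Suc h) x"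
proof (induction h arbitrary: x)
  case 0
  have "sets (K x) = sets M" using measurable_space[OF K 0] by (simp add: space_prob_algebra)
  moreover have "kiter M K 0 = return M" by (simp add: fun_eq_iff)
  ultimately show ?case
    using 0 by (simp add: bind_return[OF measurable_prob_algebraD[OF K]] bind_return'')
next
  case (Suc h)
  have Kx: "K x \<in> space (prob_algebra M)" using measurable_space[OF K Suc.prems] .
  have "bind (kiter M K (Suc h) x) K = bind (K x) (\<lambda>y. bind (kiter M K h y) K)"
    using bind_assoc[OF kernel_on_prob_algebra_point(1)[OF Kx kiter_measurable] measurable_prob_algebraD[OF K]]
    by simp
  also have "\<dots> = bind (K x) (kiter M K (Suc h))"
    using Suc.IH kernel_on_prob_algebra_point(2)[OF Kx K] by (intro bind_cong) auto
  finally show ?case by simp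
qed

lemma hchain_eq_bind_kiter:
  assumes D: "D \<in> space (prob_algebra M)"
  shows "hchain D K k = bind D (kiter M K k)"
proof (induction k)
  case 0
  have "sets D = sets M" using D by (simp add: space_prob_algebra)
  then show ?case by (simp add: bind_return'' fun_eq_iff[symmetric])
next
  case (Suc k)
  have "hchain D K (Suc k) = bind D (\<lambda>x. bind (kiter M K k x) K)"
    using Suc bind_assoc[OF kernel_on_prob_algebra_point(1)[OF D kiter_measurable] measurable_prob_algebraD[OF K]]
    by simp
  also have "\<dots> = bind D (kiter M K (Suc k))"
    using bind_kiter_Suc kernel_on_prob_algebra_point(2)[OF D K] by (intro bind_cong) auto
  finally show ?case .
qed

lemma hchain_in_prob_algebra:
  assumes "D \<in> space (prob_algebra M)"
  shows "hchain D K k \<in> space (prob_algebra M)"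
  using measurable_space[OF measurable_bind_prob_space[OF measurable_ident_sets[OF refl] kiter_measurable] assms]
  by (simp add: hchain_eq_bind_kiter[OF assms])

lemma hstep_measurable:
  assumes l: "l < L" and S: "S \<in> M \<rightarrow>\<^sub>M prob_algebra (outsp M n L (Suc l))"
  shows "(\<lambda>C. hstep M P n L l C S) \<in> prob_algebra M \<rightarrow>\<^sub>M prob_algebra (outsp M n L l)"
proof -
  have "(\<lambda>C. bind C S) \<in> prob_algebra M \<rightarrow>\<^sub>M prob_algebra (outsp M n L (Suc l))"
    by (rule measurable_bind_prob_space[OF measurable_ident_sets[OF refl] S])
  then have "(\<lambda>C. PiM {..<n (Suc l)} (\<lambda>_. bind C S))
      \<in> prob_algebra M \<rightarrow>\<^sub>M prob_algebra (PiM {..<n (Suc l)} (\<lambda>_. outsp M n L (Suc l)))"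
    by (rule measurable_PiM_prob_algebra[rotated]) simp
  then show ?thesis
    unfolding hstep_eq_bind_hagg by (rule measurable_bind_prob_space[OF _ hagg_measurable[OF l refl]])
qed

lemma hsub_measurable: "h < L \<Longrightarrow> hsub M K P n L h \<in> M \<rightarrow>\<^sub>M prob_algebra (outsp M n L (L - h))"
proof (induction h)
  case 0
  have "(\<lambda>x. (x, \<lambda>p\<in>hpaths n L L. x)) \<in> M \<rightarrow>\<^sub>M outsp M n L L"
    unfolding outsp_def by measurable
  from measurable_comp[OF this measurable_return_prob_space] show ?case
    by (simp add: comp_def)
next
  case (Suc h)
  then have "L - Suc h < L" "Suc (L - Suc h) = L - h" by auto
  with Suc show ?case
    using measurable_comp[OF K hstep_measurable[of "L - Suc h" "hsub M K P n L h"]] by (simp add: comp_def)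
qed

lemma hsub_root_measurable:
  "0 < L \<Longrightarrow> hsub M K P n L (L - 1) \<in> M \<rightarrow>\<^sub>M prob_algebra (outsp M n L (Suc 0))"
  using hsub_measurable[of "L - 1"] by simp

context
  fixes l C S
  assumes l: "l < L" and C: "C \<in> space (prob_algebra M)"
    and S: "S \<in> M \<rightarrow>\<^sub>M prob_algebra (outsp M n L (Suc l))"
begin

lemma sets_bind_child: "sets (bind C S) = sets (outsp M n L (Suc l))"
  using sets_bind'[OF C S] .

lemma prob_space_children: "prob_space (PiM {..<n (Suc l)} (\<lambda>_. bind C S))"
  using prob_space_bind'[OF C S] by (rule prob_space_PiM)

lemma distr_hstep_leaf:
  assumes p: "j # q \<in> hpaths n l L"
  shows "distr (hstep M P n L l C S) M (\<lambda>r. snd r (j # q)) = distr (bind C S) M (\<lambda>r. snd r q)"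
proof -
  let ?R = "bind C S"
  let ?\<Omega> = "PiM {..<n (Suc l)} (\<lambda>_. ?R)"
  have jq: "j \<in> {..<n (Suc l)}" "q \<in> hpaths n (Suc l) L" using hpaths_ConsD[OF p l] by auto
  have leaf_p: "(\<lambda>r. snd r (j # q)) \<in> outsp M n L l \<rightarrow>\<^sub>M M" unfolding outsp_def using p by measurable
  have leaf_q: "(\<lambda>r. snd r q) \<in> ?R \<rightarrow>\<^sub>M M"
    unfolding measurable_cong_sets[OF sets_bind_child refl] outsp_def using jq by measurable
  have component: "(\<lambda>rs. rs j) \<in> ?\<Omega> \<rightarrow>\<^sub>M ?R" by (rule measurable_component_singleton[OF jq(1)])
  have "distr (hstep M P n L l C S) M (\<lambda>r. snd r (j # q))
      = bind ?\<Omega> (\<lambda>rs. distr (hagg M P n L l rs) M (\<lambda>r. snd r (j # q)))"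
    unfolding hstep_eq_bind_hagg
    by (rule distr_bind[OF measurable_prob_algebraD[OF hagg_measurable[OF l sets_bind_child]]
          prob_space.not_empty[OF prob_space_children] leaf_p])
  also have "\<dots> = bind ?\<Omega> (\<lambda>rs. return M (snd (rs j) q))"
    using distr_hagg_leaf[OF l sets_bind_child _ p] by (intro bind_cong) (simp_all add: child_leaves_def p)
  also have "\<dots> = distr ?\<Omega> M (\<lambda>rs. snd (rs j) q)"
    by (intro bind_return_distr' prob_space.not_empty[OF prob_space_children]
          measurable_compose[OF component leaf_q])
  also have "\<dots> = distr (distr ?\<Omega> ?R (\<lambda>rs. rs j)) M (\<lambda>r. snd r q)"
    by (simp add: distr_distr[OF leaf_q component] comp_def)
  also have "distr ?\<Omega> ?R (\<lambda>rs. rs j) = ?R"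
    using prob_space_bind'[OF C S] jq by (intro distr_PiM_component) auto
  finally show ?thesis .
qed

lemma nn_integral_hstep:
  assumes g: "g \<in> borel_measurable (outsp M n L l)"
  shows "(\<integral>\<^sup>+ x. g x \<partial>hstep M P n L l C S)
    = (\<integral>\<^sup>+ rs. \<integral>\<^sup>+ w. g (w, child_leaves n L l rs) \<partial>P l (child_outputs n l rs) \<partial>PiM {..<n (Suc l)} (\<lambda>_. bind C S))"
  unfolding hstep_eq_bind_hagg nn_integral_bind[OF g measurable_prob_algebraD[OF hagg_measurable[OF l sets_bind_child]]]
  using g by (intro nn_integral_cong)
    (simp add: hagg_eq_distr[OF l sets_bind_child] nn_integral_distr[OF measurable_Pair_child_leaves[OF l sets_bind_child]])

end

lemma distr_hsub_leaf:
  "h < L \<Longrightarrow> x \<in> space M \<Longrightarrow> q \<in> hpaths n (L - h) L \<Longrightarrow>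
    distr (hsub M K P n L h x) M (\<lambda>r. snd r q) = kiter M K h x"
proof (induction h arbitrary: x q)
  case 0
  then have q: "q \<in> hpaths n L L" by simp
  have "(\<lambda>r. snd r q) \<in> outsp M n L L \<rightarrow>\<^sub>M M" unfolding outsp_def using q by measurable
  moreover have "(x, \<lambda>p\<in>hpaths n L L. x) \<in> space (outsp M n L L)"
    unfolding outsp_def using 0 by (auto simp: space_pair_measure space_PiM)
  ultimately show ?case using q by (simp add: distr_return)
next
  case (Suc h)
  define l where "l = L - Suc h"
  have l: "l < L" "Suc l = L - h" using Suc.prems by (auto simp: l_def)
  have S: "hsub M K P n L h \<in> M \<rightarrow>\<^sub>M prob_algebra (outsp M n L (Suc l))"
    using hsub_measurable[of h] Suc.prems by (simp add: l)
  have Kx: "K x \<in> space (prob_algebra M)" by (rule measurable_space[OF K Suc.prems(2)])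
  note q = hpaths_ConsD[of q n l L, OF _ l(1)]
  have "distr (hsub M K P n L (Suc h) x) M (\<lambda>r. snd r q)
      = distr (bind (K x) (hsub M K P n L h)) M (\<lambda>r. snd r (tl q))"
    using distr_hstep_leaf[OF l(1) Kx S, of "hd q" "tl q"] q Suc.prems by (simp add: l_def)
  also have "\<dots> = bind (K x) (\<lambda>y. distr (hsub M K P n L h y) M (\<lambda>r. snd r (tl q)))"
    using q Suc.prems unfolding l_def[symmetric]
    by (intro distr_bind_prob_algebra[OF Kx S]) (unfold outsp_def, measurable)
  also have "\<dots> = kiter M K (Suc h) x"
    using Suc.IH[of _ "tl q"] Suc.prems q kernel_on_prob_algebra_point(2)[OF Kx K]
    by (auto intro!: bind_cong simp: l l_def[symmetric])
  finally show ?case .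
qed

lemma distr_bind_hsub_leaf:
  assumes C: "C \<in> space (prob_algebra M)" and h: "h < L" and q: "q \<in> hpaths n (L - h) L"
  shows "distr (bind C (hsub M K P n L h)) M (\<lambda>r. snd r q) = bind C (kiter M K h)"
proof -
  have "(\<lambda>r. snd r q) \<in> outsp M n L (L - h) \<rightarrow>\<^sub>M M" unfolding outsp_def using q by measurable
  then have "distr (bind C (hsub M K P n L h)) M (\<lambda>r. snd r q)
      = bind C (\<lambda>x. distr (hsub M K P n L h x) M (\<lambda>r. snd r q))"
    by (rule distr_bind_prob_algebra[OF C hsub_measurable[OF h]])
  also have "\<dots> = bind C (kiter M K h)"
    using distr_hsub_leaf[OF h _ q] kernel_on_prob_algebra_point(2)[OF C K] by (intro bind_cong) auto
  finally show ?thesis .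
qed

section \<open>The generalization gap\<close>

context
  fixes D :: "'a measure" and loss :: "'a \<Rightarrow> 'a \<Rightarrow> real"
  assumes D: "D \<in> space (prob_algebra M)"
    and loss_meas[measurable]: "(\<lambda>(w, z). loss w z) \<in> borel_measurable (M \<Otimes>\<^sub>M M)"
    and loss_range: "\<And>w z. w \<in> space M \<Longrightarrow> z \<in> space M \<Longrightarrow> 0 \<le> loss w z \<and> loss w z \<le> 1"
begin

lemma sets_hchain: "sets (hchain D K k) = sets M"
  and prob_space_hchain: "prob_space (hchain D K k)"
  using hchain_in_prob_algebra[OF D] by (auto simp: space_prob_algebra)

lemma pop_loss_measurable[measurable]: "(\<lambda>w. pop_loss D K L loss w) \<in> borel_measurable M"
proof -
  interpret H: prob_space "hchain D K (L - 1)" by (rule prob_space_hchain)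
  have "(\<lambda>(w, z). loss w z) \<in> borel_measurable (M \<Otimes>\<^sub>M hchain D K (L - 1))"
    using loss_meas unfolding measurable_cong_sets[OF sets_pair_measure_cong[OF refl sets_hchain] refl] .
  then show ?thesis
    unfolding pop_loss_def by (rule H.borel_measurable_lebesgue_integral)
qed

context
  fixes w assumes w: "w \<in> space M"
begin

lemma integrable_loss_hchain: "integrable (hchain D K k) (loss w)"
proof -
  interpret H: prob_space "hchain D K k" by (rule prob_space_hchain)
  have "loss w \<in> borel_measurable (hchain D K k)"
    unfolding measurable_cong_sets[OF sets_hchain refl] using w by measurable
  then show ?thesis
    using w loss_range sets_eq_imp_space_eq[OF sets_hchain] by (intro H.integrable_const_bound[where B=1]) auto
qed

lemma pop_loss_range: "0 \<le> pop_loss D K L loss w \<and> pop_loss D K L loss w \<le> 1"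
proof -
  have "\<forall>z\<in>space (hchain D K (L - 1)). 0 \<le> loss w z \<and> loss w z \<le> 1"
    using w loss_range sets_eq_imp_space_eq[OF sets_hchain] by auto
  then show ?thesis
    unfolding pop_loss_def
    by (auto intro!: integral_nonneg_AE AE_I2
        prob_space.integral_le_const[OF prob_space_hchain integrable_loss_hchain])
qed

lemma ennreal_pop_loss:
  "ennreal (pop_loss D K L loss w) = (\<integral>\<^sup>+ z. ennreal (loss w z) \<partial>hchain D K (L - 1))"
  unfolding pop_loss_def using w loss_range sets_eq_imp_space_eq[OF sets_hchain]
  by (subst nn_integral_eq_integral[OF integrable_loss_hchain]) auto

end

lemma ennreal_pop_loss_eq_leaf:
  assumes L: "0 < L" and q: "q \<in> hpaths n (Suc 0) L" and w: "w \<in> space M"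
  shows "ennreal (pop_loss D K L loss w)
    = (\<integral>\<^sup>+ y. ennreal (loss w (snd y q)) \<partial>bind D (hsub M K P n L (L - 1)))"
proof -
  let ?R = "bind D (hsub M K P n L (L - 1))"
  have leaf_q: "(\<lambda>r. snd r q) \<in> ?R \<rightarrow>\<^sub>M M"
    unfolding measurable_cong_sets[OF sets_bind'[OF D hsub_root_measurable[OF L]] refl] outsp_def
    using q by measurable
  have marginal: "distr ?R M (\<lambda>r. snd r q) = hchain D K (L - 1)"
    using distr_bind_hsub_leaf[OF D, of "L - 1" q] q L by (simp add: hchain_eq_bind_kiter[OF D])
  have "(\<integral>\<^sup>+ y. ennreal (loss w (snd y q)) \<partial>?R) = (\<integral>\<^sup>+ z. ennreal (loss w z) \<partial>distr ?R M (\<lambda>r. snd r q))"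
    by (rule nn_integral_distr[OF leaf_q, symmetric]) (use w in measurable)
  then show ?thesis unfolding ennreal_pop_loss[OF w] marginal by (rule sym)
qed

lemma hjoint_leaf_loss_ge:
  assumes L: "0 < L" and dp: "dp_kernel M (n 1) (P 0) \<epsilon>" and p: "p \<in> hpaths n 0 L"
  shows "ennreal (exp (- \<epsilon>)) * (\<integral>\<^sup>+ x. ennreal (pop_loss D K L loss (fst x)) \<partial>hjoint M D K P n L)
    \<le> (\<integral>\<^sup>+ x. ennreal (loss (fst x) (snd x p)) \<partial>hjoint M D K P n L)"
proof -
  let ?S = "hsub M K P n L (L - 1)"
  let ?R = "bind D ?S"
  let ?\<Omega> = "PiM {..<n (Suc 0)} (\<lambda>_. ?R)"
  let ?Q = "\<lambda>rs. P 0 (child_outputs n 0 rs)"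
  note S = hsub_root_measurable[OF L]
  have R: "sets ?R = sets (outsp M n L (Suc 0))" "prob_space ?R"
    using sets_bind'[OF D S] prob_space_bind'[OF D S] by auto
  obtain j q where p_eq: "p = j # q" and j: "j \<in> {..<n (Suc 0)}" and q: "q \<in> hpaths n (Suc 0) L"
    using hpaths_ConsD[OF p L] by (metis lessThan_iff)
  have space_Q: "space (?Q rs) = space M" if "rs \<in> space ?\<Omega>" for rs
    using aggregate_in_prob_algebra[OF L R(1) that] sets_eq_imp_space_eq[of "?Q rs" M]
    by (simp add: space_prob_algebra)
  have Q: "?Q \<in> ?\<Omega> \<rightarrow>\<^sub>M prob_algebra M"
    using measurable_comp[OF measurable_child_outputs[OF R(1)] P[OF L]] by (simp add: comp_def)
  have stable: "(\<integral>\<^sup>+ w. g w \<partial>?Q (rs(j := y))) \<le> ennreal (exp \<epsilon>) * (\<integral>\<^sup>+ w. g w \<partial>?Q rs)"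
    if rs: "rs \<in> space ?\<Omega>" and y: "y \<in> space ?R" and g: "g \<in> borel_measurable M" for rs y g
  proof (rule dp_kernel_nn_integral_le[OF _ P[OF L] _ _ j[simplified] _ g])
    show "dp_kernel M (n (Suc 0)) (P 0) \<epsilon>" using dp by simp
    have "rs(j := y) \<in> space ?\<Omega>"
      using PiE_fun_upd[of y "\<lambda>_. space ?R" j rs "{..<n (Suc 0)}"] rs y
      by (simp add: space_PiM insert_absorb[OF j])
    then show "child_outputs n 0 (rs(j := y)) \<in> space (PiM {..<n (Suc 0)} (\<lambda>_. M))"
      "child_outputs n 0 rs \<in> space (PiM {..<n (Suc 0)} (\<lambda>_. M))"
      using measurable_space[OF measurable_child_outputs[OF R(1)]] rs by auto
    show "child_outputs n 0 (rs(j := y)) i = child_outputs n 0 rs i" if "i \<noteq> j" for i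
      using that by (simp add: child_outputs_def)
  qed
  have h: "(\<lambda>(w, y). ennreal (loss w (snd y q))) \<in> borel_measurable (M \<Otimes>\<^sub>M ?R)"
    unfolding measurable_cong_sets[OF sets_pair_measure_cong[OF refl R(1)] refl] outsp_def using q by measurable
  have pop_meas: "(\<lambda>x. ennreal (pop_loss D K L loss (fst x))) \<in> borel_measurable (outsp M n L 0)"
    unfolding outsp_def by measurable
  have leaf_loss_meas: "(\<lambda>x. ennreal (loss (fst x) (snd x p))) \<in> borel_measurable (outsp M n L 0)"
    unfolding outsp_def using p by measurable
  have "(\<integral>\<^sup>+ x. ennreal (pop_loss D K L loss (fst x)) \<partial>hjoint M D K P n L)
      = (\<integral>\<^sup>+ rs. \<integral>\<^sup>+ w. ennreal (pop_loss D K L loss w) \<partial>?Q rs \<partial>?\<Omega>)"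
    using nn_integral_hstep[OF L D S pop_meas] by (simp add: hjoint_def)
  also have "\<dots> = (\<integral>\<^sup>+ rs. \<integral>\<^sup>+ w. \<integral>\<^sup>+ y. ennreal (loss w (snd y q)) \<partial>?R \<partial>?Q rs \<partial>?\<Omega>)"
  proof (intro nn_integral_cong)
    fix rs w assume "rs \<in> space ?\<Omega>" "w \<in> space (?Q rs)"
    then have "w \<in> space M" using space_Q by blast
    then show "ennreal (pop_loss D K L loss w) = (\<integral>\<^sup>+ y. ennreal (loss w (snd y q)) \<partial>?R)"
      by (rule ennreal_pop_loss_eq_leaf[OF L q])
  qed
  finally have pop_eq: "(\<integral>\<^sup>+ x. ennreal (pop_loss D K L loss (fst x)) \<partial>hjoint M D K P n L)
      = (\<integral>\<^sup>+ rs. \<integral>\<^sup>+ w. \<integral>\<^sup>+ y. ennreal (loss w (snd y q)) \<partial>?R \<partial>?Q rs \<partial>?\<Omega>)" .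
  have leaf_eq: "(\<integral>\<^sup>+ x. ennreal (loss (fst x) (snd x p)) \<partial>hjoint M D K P n L)
      = (\<integral>\<^sup>+ rs. \<integral>\<^sup>+ w. ennreal (loss w (snd (rs j) q)) \<partial>?Q rs \<partial>?\<Omega>)"
    using nn_integral_hstep[OF L D S leaf_loss_meas] p by (simp add: hjoint_def child_leaves_def p_eq)
  show ?thesis
    unfolding pop_eq leaf_eq by (rule nn_integral_resample_coordinate_le[OF R(2) _ j Q h stable]) auto
qed

lemma hgen_le_one_minus_exp:
  assumes L: "0 < L" and n: "\<And>l. l \<in> {1..L} \<Longrightarrow> 1 \<le> n l"
    and dp: "dp_kernel M (n 1) (P 0) \<epsilon>" and \<epsilon>_nonneg: "0 \<le> \<epsilon>"
  shows "hgen M D K P n L loss \<le> 1 - exp (- \<epsilon>)"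
proof -
  let ?J = "hjoint M D K P n L"
  let ?A = "hpaths n 0 L"
  have "?J \<in> space (prob_algebra (outsp M n L 0))"
    unfolding hjoint_def by (rule measurable_space[OF hstep_measurable[OF L hsub_root_measurable[OF L]] D])
  then have J: "sets ?J = sets (outsp M n L 0)" "prob_space ?J" by (auto simp: space_prob_algebra)
  have space_J: "fst x \<in> space M" "\<And>p. p \<in> ?A \<Longrightarrow> snd x p \<in> space M" if "x \<in> space ?J" for x
    using that sets_eq_imp_space_eq[OF J(1)] by (auto simp: outsp_def space_pair_measure space_PiM)
  have A: "finite ?A" "card ?A = (\<Prod>l\<in>{1..L}. n l)" using finite_card_hpaths[of 0 L n] by auto
  have "0 < card ?A" unfolding A(2) using n by (intro prod_pos) fastforce
  then have "?A \<noteq> {}" by auto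
  have "hgen M D K P n L loss
      = (\<integral> x. pop_loss D K L loss (fst x) - (\<Sum>p\<in>?A. loss (fst x) (snd x p)) / real (card ?A) \<partial>?J)"
    unfolding hgen_def emp_loss_def A(2) ..
  also have "\<dots> \<le> 1 - exp (- \<epsilon>)"
  proof (rule integral_diff_mean_le[OF J(2) A(1) \<open>?A \<noteq> {}\<close>])
    show "0 \<le> exp (- \<epsilon>)" "exp (- \<epsilon>) \<le> 1" using \<epsilon>_nonneg by auto
    show "(\<lambda>x. pop_loss D K L loss (fst x)) \<in> borel_measurable ?J"
      unfolding measurable_cong_sets[OF J(1) refl] outsp_def by measurable
    show "(\<lambda>x. loss (fst x) (snd x p)) \<in> borel_measurable ?J" if "p \<in> ?A" for p
      unfolding measurable_cong_sets[OF J(1) refl] outsp_def using that by measurable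
    show "0 \<le> pop_loss D K L loss (fst x) \<and> pop_loss D K L loss (fst x) \<le> 1" if "x \<in> space ?J" for x
      using pop_loss_range space_J that by blast
    show "0 \<le> loss (fst x) (snd x p) \<and> loss (fst x) (snd x p) \<le> 1" if "p \<in> ?A" "x \<in> space ?J" for p x
      using loss_range space_J that by blast
    show "ennreal (exp (- \<epsilon>)) * (\<integral>\<^sup>+ x. ennreal (pop_loss D K L loss (fst x)) \<partial>?J)
        \<le> (\<integral>\<^sup>+ x. ennreal (loss (fst x) (snd x p)) \<partial>?J)" if "p \<in> ?A" for p
      by (rule hjoint_leaf_loss_ge[OF L dp that])
  qed
  finally show ?thesis .
qed

end

end

theorem theorem2:
  fixes M :: "'a measure" and D :: "'a measure" and K :: "'a \<Rightarrow> 'a measure"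
    and P :: "nat \<Rightarrow> (nat \<Rightarrow> 'a) \<Rightarrow> 'a measure"
    and n :: "nat \<Rightarrow> nat" and L :: nat and loss :: "'a \<Rightarrow> 'a \<Rightarrow> real" and \<epsilon> :: "nat \<Rightarrow> real"
  assumes L: "L \<ge> 1"
    and n: "\<And>l. l \<in> {1..L} \<Longrightarrow> n l \<ge> 1"
    and D: "D \<in> space (prob_algebra M)"
    and K: "K \<in> M \<rightarrow>\<^sub>M prob_algebra M"
    and P: "\<And>l. l < L \<Longrightarrow> P l \<in> PiM {..<n (Suc l)} (\<lambda>_. M) \<rightarrow>\<^sub>M prob_algebra M"
    and loss_meas: "(\<lambda>(w, z). loss w z) \<in> borel_measurable (M \<Otimes>\<^sub>M M)"
    and loss_range: "\<And>w z. w \<in> space M \<Longrightarrow> z \<in> space M \<Longrightarrow> 0 \<le> loss w z \<and> loss w z \<le> 1"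
    and dp: "\<And>l. l \<in> {1..L} \<Longrightarrow> dp_kernel M (n l) (P (l - 1)) (\<epsilon> l)"
  shows "hgen M D K P n L loss
           \<le> 2 * (\<Sum>l = 1..L. sqrt (min (\<epsilon> l) (\<epsilon> l * (exp (\<epsilon> l) - 1))))"
proof -
  interpret hierarchical_sampling M K P n L using K P by unfold_locales
  have "space M \<noteq> {}"
    using D sets_eq_imp_space_eq[of D M] by (auto simp: space_prob_algebra dest: prob_space.not_empty)
  then have \<epsilon>_nonneg: "0 \<le> \<epsilon> l" if "l \<in> {1..L}" for l
    using dp_kernel_nonneg[OF dp[OF that] _ n[OF that]] P[of "l - 1"] that by auto
  have "hgen M D K P n L loss \<le> 1 - exp (- \<epsilon> 1)"
    using hgen_le_one_minus_exp[OF D loss_meas loss_range _ n _ \<epsilon>_nonneg[of 1]] dp[of 1] L by simp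
  also have "\<dots> \<le> 2 * sqrt (min (\<epsilon> 1) (\<epsilon> 1 * (exp (\<epsilon> 1) - 1)))"
    using \<epsilon>_nonneg[of 1] L by (intro one_minus_exp_neg_le_sqrt_min) simp
  also have "\<dots> \<le> 2 * (\<Sum>l = 1..L. sqrt (min (\<epsilon> l) (\<epsilon> l * (exp (\<epsilon> l) - 1))))"
    using \<epsilon>_nonneg L by (intro mult_left_mono member_le_sum) auto
  finally show ?thesis .
qed

end
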